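(* The number of $n$-dimensional Matoušek-type USOs is $2^{\Theta(n^2)}$.
   Context: All vectors and matrices are over $GF(2)$; $\oplus$ denotes xor. An orientation of the $n$-dimensional hypercube $\{0,1\}^n$ is given by an outmap $o:\{0,1\}^n\to\{0,1\}^n$, the edge $\{v,v\oplus e_i\}$ being directed away from $v$ iff $o(v)_i=1$. An $n$-dimensional Matoušek-type USO is an orientation of the form $o(v)=M(v\oplus s)$ for all $v$, where $M=PAP^T$ for some permutation matrix $P$ and some invertible upper-triangular matrix $A\in\{0,1\}^{n\times n}$, and $s\in\{0,1\}^n$. Two Matoušek-type USOs are counted as different iff their outmap functions differ. *)

theory Defs
  imports Main "HOL-Library.FuncSet" "HOL-Library.Landau_Symbols"
begin

text \<open>Vectors in GF(2)^n are functions nat => bool that vanish (are False) outside {0..<n};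
  n x n matrices over GF(2) are functions nat => nat => bool, only entries with indices < n matter.
  xor is (\<noteq>) on bool, and a sum over GF(2) is the parity of the number of true terms.\<close>

definition cube :: "nat \<Rightarrow> (nat \<Rightarrow> bool) set" where
  "cube n = {v. \<forall>i. n \<le> i \<longrightarrow> \<not> v i}"

definition vxor :: "(nat \<Rightarrow> bool) \<Rightarrow> (nat \<Rightarrow> bool) \<Rightarrow> (nat \<Rightarrow> bool)" where
  "vxor v w = (\<lambda>i. v i \<noteq> w i)"

definition matvec :: "nat \<Rightarrow> (nat \<Rightarrow> nat \<Rightarrow> bool) \<Rightarrow> (nat \<Rightarrow> bool) \<Rightarrow> (nat \<Rightarrow> bool)" where
  "matvec n M v = (\<lambda>i. i < n \<and> odd (card {j. j < n \<and> M i j \<and> v j}))"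

definition matmul :: "nat \<Rightarrow> (nat \<Rightarrow> nat \<Rightarrow> bool) \<Rightarrow> (nat \<Rightarrow> nat \<Rightarrow> bool) \<Rightarrow> (nat \<Rightarrow> nat \<Rightarrow> bool)" where
  "matmul n A B = (\<lambda>i j. odd (card {k. k < n \<and> A i k \<and> B k j}))"

definition transp_mat :: "(nat \<Rightarrow> nat \<Rightarrow> bool) \<Rightarrow> (nat \<Rightarrow> nat \<Rightarrow> bool)" where
  "transp_mat P = (\<lambda>i j. P j i)"

definition perm_matrix :: "nat \<Rightarrow> (nat \<Rightarrow> nat \<Rightarrow> bool) \<Rightarrow> bool" where
  "perm_matrix n P \<longleftrightarrow>
     (\<forall>i<n. \<exists>!j. j < n \<and> P i j) \<and> (\<forall>j<n. \<exists>!i. i < n \<and> P i j)"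

definition invertible_mat :: "nat \<Rightarrow> (nat \<Rightarrow> nat \<Rightarrow> bool) \<Rightarrow> bool" where
  "invertible_mat n A \<longleftrightarrow> (\<exists>B. \<forall>i<n. \<forall>j<n.
     matmul n A B i j = (i = j) \<and> matmul n B A i j = (i = j))"

definition upper_triangular :: "nat \<Rightarrow> (nat \<Rightarrow> nat \<Rightarrow> bool) \<Rightarrow> bool" where
  "upper_triangular n A \<longleftrightarrow> (\<forall>i<n. \<forall>j<n. j < i \<longrightarrow> \<not> A i j)"

definition matousek_outmap ::
  "nat \<Rightarrow> (nat \<Rightarrow> nat \<Rightarrow> bool) \<Rightarrow> (nat \<Rightarrow> bool) \<Rightarrow> (nat \<Rightarrow> bool) \<Rightarrow> (nat \<Rightarrow> bool)" where
  "matousek_outmap n M s = restrict (\<lambda>v. matvec n M (vxor v s)) (cube n)"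

definition matousek_usos :: "nat \<Rightarrow> ((nat \<Rightarrow> bool) \<Rightarrow> (nat \<Rightarrow> bool)) set" where
  "matousek_usos n = {matousek_outmap n (matmul n (matmul n P A) (transp_mat P)) s | P A s.
      perm_matrix n P \<and> upper_triangular n A \<and> invertible_mat n A \<and> s \<in> cube n}"

end

theory Submission
  imports Defs
begin

text \<open>An outmap v \<mapsto> M(v \<oplus> s) depends only on the n\<times>n entries of M and the n bits of s,
  so there are at most 2^(n^2 + n) Matousek-type USOs. Conversely, take P = I, s = 0 and
  A = I + X with X an arbitrary 0/1 matrix on the top-right \<lfloor>n/2\<rfloor>\<times>\<lceil>n/2\<rceil> block: A is
  upper unitriangular with A^2 = I, and the outmap sends the unit vector e_j to the j-th column
  of A. Hence distinct X give distinct USOs, and there are at least 2^(\<lfloor>n/2\<rfloor>\<lceil>n/2\<rceil>) \<ge> 2^(n^2/8)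
  of them.\<close>

lemma matvec_cong:
  assumes "\<And>i j. i < n \<Longrightarrow> j < n \<Longrightarrow> M i j = M' i j"
  shows "matvec n M v = matvec n M' v"
proof -
  have "{j. j < n \<and> M i j \<and> v j} = {j. j < n \<and> M' i j \<and> v j}" if "i < n" for i
    using assms that by blast
  then show ?thesis unfolding matvec_def by (metis (no_types, lifting))
qed

lemma matousek_outmap_cong:
  assumes "\<And>i j. i < n \<Longrightarrow> j < n \<Longrightarrow> M i j = M' i j"
  shows "matousek_outmap n M s = matousek_outmap n M' s"
  unfolding matousek_outmap_def using matvec_cong[OF assms] by simp

lemma matousek_usos_subset:
  "matousek_usos n \<subseteq> (\<lambda>(X, Y). matousek_outmap n (\<lambda>i j. (i, j) \<in> X) (\<lambda>i. i \<in> Y)) `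
     (Pow ({..<n} \<times> {..<n}) \<times> Pow {..<n})"
proof
  fix f assume "f \<in> matousek_usos n"
  then obtain M s where f: "f = matousek_outmap n M s" and s: "s \<in> cube n"
    unfolding matousek_usos_def by blast
  define X where "X = {(i, j). i < n \<and> j < n \<and> M i j}"
  define Y where "Y = {i. s i}"
  have Y_s: "(\<lambda>i. i \<in> Y) = s" by (simp add: Y_def)
  have "f = matousek_outmap n (\<lambda>i j. (i, j) \<in> X) (\<lambda>i. i \<in> Y)"
    unfolding f Y_s by (rule matousek_outmap_cong) (simp add: X_def)
  moreover have "Y \<subseteq> {..<n}"
    using s leI unfolding Y_def cube_def by blast
  then have "(X, Y) \<in> Pow ({..<n} \<times> {..<n}) \<times> Pow {..<n}"
    by (auto simp: X_def)
  ultimately show "f \<in> (\<lambda>(X, Y). matousek_outmap n (\<lambda>i j. (i, j) \<in> X) (\<lambda>i. i \<in> Y)) `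
     (Pow ({..<n} \<times> {..<n}) \<times> Pow {..<n})"
    by (intro image_eqI[where x = "(X, Y)"]) simp_all
qed

lemma finite_matousek_usos: "finite (matousek_usos n)"
  by (rule finite_subset[OF matousek_usos_subset]) auto

lemma card_matousek_usos_le: "card (matousek_usos n) \<le> 2 ^ (n * n + n)"
proof -
  let ?outmap = "\<lambda>(X, Y). matousek_outmap n (\<lambda>i j. (i, j) \<in> X) (\<lambda>i. i \<in> Y)"
  have "card (matousek_usos n) \<le> card (?outmap ` (Pow ({..<n} \<times> {..<n}) \<times> Pow {..<n}))"
    by (rule card_mono[OF _ matousek_usos_subset]) simp
  also have "\<dots> \<le> card (Pow ({..<n} \<times> {..<n}) \<times> Pow {..<n})"
    by (rule card_image_le) simp
  also have "\<dots> = 2 ^ (n * n + n)"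
    by (simp add: card_cartesian_product card_Pow power_add)
  finally show ?thesis .
qed

definition id_mat :: "nat \<Rightarrow> nat \<Rightarrow> bool" where
  "id_mat = (\<lambda>i j. i = j)"

lemma perm_matrix_id_mat: "perm_matrix n id_mat"
  by (auto simp: perm_matrix_def id_mat_def)

lemma transp_id_mat [simp]: "transp_mat id_mat = id_mat"
  by (auto simp: transp_mat_def id_mat_def)

lemma matmul_id_mat_left:
  assumes "i < n"
  shows "matmul n id_mat A i j = A i j"
proof -
  have "{k. k < n \<and> id_mat i k \<and> A k j} = (if A i j then {i} else {})"
    using assms by (auto simp: id_mat_def)
  then show ?thesis by (simp add: matmul_def)
qed

lemma matmul_id_mat_right:
  assumes "j < n"
  shows "matmul n A id_mat i j = A i j"
proof -
  have "{k. k < n \<and> A i k \<and> id_mat k j} = (if A i j then {j} else {})"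
    using assms by (auto simp: id_mat_def)
  then show ?thesis by (simp add: matmul_def)
qed

text \<open>I + X for X supported on the corner block of rows < m and columns \<ge> m; such an X
  squares to zero, so I + X is its own inverse.\<close>
definition corner_unipotent :: "nat \<Rightarrow> (nat \<times> nat) set \<Rightarrow> nat \<Rightarrow> nat \<Rightarrow> bool" where
  "corner_unipotent m X = (\<lambda>i j. i = j \<or> (i < m \<and> m \<le> j \<and> (i, j) \<in> X))"

lemma upper_triangular_corner_unipotent: "upper_triangular n (corner_unipotent m X)"
  by (auto simp: upper_triangular_def corner_unipotent_def)

lemma matmul_corner_unipotent_self:
  assumes "i < n" "j < n"
  shows "matmul n (corner_unipotent m X) (corner_unipotent m X) i j = (i = j)"
proof -
  have "{k. k < n \<and> corner_unipotent m X i k \<and> corner_unipotent m X k j} =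
      (if i = j then {i} else if corner_unipotent m X i j then {i, j} else {})"
    using assms by (auto simp: corner_unipotent_def)
  then show ?thesis by (simp add: matmul_def)
qed

lemma invertible_corner_unipotent: "invertible_mat n (corner_unipotent m X)"
  unfolding invertible_mat_def using matmul_corner_unipotent_self by blast

lemma corner_unipotent_outmap_in_matousek_usos:
  "matousek_outmap n (corner_unipotent m X) (\<lambda>_. False) \<in> matousek_usos n"
proof -
  have "matousek_outmap n (corner_unipotent m X) (\<lambda>_. False) =
      matousek_outmap n (matmul n (matmul n id_mat (corner_unipotent m X)) (transp_mat id_mat))
        (\<lambda>_. False)"
    by (rule matousek_outmap_cong) (simp add: matmul_id_mat_left matmul_id_mat_right)
  moreover have "(\<lambda>_. False) \<in> cube n" by (simp add: cube_def)
  ultimately show ?thesis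
    unfolding matousek_usos_def
    using perm_matrix_id_mat upper_triangular_corner_unipotent invertible_corner_unipotent
    by blast
qed

lemma matousek_outmap_unit_vector:
  assumes "s \<in> cube n" "i < n" "j < n"
  shows "matousek_outmap n M s (vxor (\<lambda>k. k = j) s) i = M i j"
proof -
  have "vxor (\<lambda>k. k = j) s \<in> cube n"
    using assms by (auto simp: cube_def vxor_def)
  moreover have "vxor (vxor (\<lambda>k. k = j) s) s = (\<lambda>k. k = j)"
    by (auto simp: vxor_def)
  moreover have "{k. k < n \<and> M i k \<and> k = j} = (if M i j then {j} else {})"
    using assms by auto
  ultimately show ?thesis
    using assms by (simp add: matousek_outmap_def matvec_def)
qed

lemma inj_on_corner_unipotent_outmap:
  "inj_on (\<lambda>X. matousek_outmap n (corner_unipotent m X) (\<lambda>_. False)) (Pow ({..<m} \<times> {m..<n}))"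
proof (rule inj_onI)
  fix X Y
  assume X: "X \<in> Pow ({..<m} \<times> {m..<n})" and Y: "Y \<in> Pow ({..<m} \<times> {m..<n})"
    and eq: "matousek_outmap n (corner_unipotent m X) (\<lambda>_. False) =
             matousek_outmap n (corner_unipotent m Y) (\<lambda>_. False)"
  have zero: "(\<lambda>_. False) \<in> cube n" by (simp add: cube_def)
  have "(i, j) \<in> X \<longleftrightarrow> (i, j) \<in> Y" if "i < m" "m \<le> j" "j < n" for i j
  proof -
    have "i < n" using that by simp
    then have "corner_unipotent m X i j = corner_unipotent m Y i j"
      using matousek_outmap_unit_vector[OF zero _ \<open>j < n\<close>] eq by metis
    then show ?thesis using that by (simp add: corner_unipotent_def)
  qed
  then show "X = Y"
    using X Y by (auto 0 3)
qed

lemma card_matousek_usos_ge: "2 ^ (m * (n - m)) \<le> card (matousek_usos n)"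
proof -
  have "2 ^ (m * (n - m)) = card (Pow ({..<m} \<times> {m..<n}))"
    by (simp add: card_Pow card_cartesian_product)
  also have "\<dots> = card ((\<lambda>X. matousek_outmap n (corner_unipotent m X) (\<lambda>_. False)) `
      Pow ({..<m} \<times> {m..<n}))"
    using card_image[OF inj_on_corner_unipotent_outmap] by simp
  also have "\<dots> \<le> card (matousek_usos n)"
    using finite_matousek_usos corner_unipotent_outmap_in_matousek_usos
    by (intro card_mono) auto
  finally show ?thesis .
qed

lemma sq_div_eight_le_mult_halves:
  assumes "2 \<le> n"
  shows "real n ^ 2 / 8 \<le> real (n div 2 * (n - n div 2))"
proof -
  obtain k where "n = 2 * k \<or> n = 2 * k + 1"
    by (metis dvd_mult_div_cancel odd_two_times_div_two_succ)
  then have "n ^ 2 \<le> 8 * (n div 2 * (n - n div 2))"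
    using assms by (auto simp: power2_eq_square algebra_simps)
  then have "real (n ^ 2) \<le> real (8 * (n div 2 * (n - n div 2)))"
    by (simp only: of_nat_le_iff)
  then show ?thesis by simp
qed

theorem lemma9:
  shows "(\<lambda>n. log 2 (real (card (matousek_usos n)))) \<in> \<Theta>(\<lambda>n. real n ^ 2)"
proof (rule bigthetaI'[of "1/8" 2])
  show "\<forall>\<^sub>F n in sequentially.
     1/8 * norm (real n ^ 2) \<le> norm (log 2 (real (card (matousek_usos n)))) \<and>
     norm (log 2 (real (card (matousek_usos n)))) \<le> 2 * norm (real n ^ 2)"
    using eventually_ge_at_top[of 2]
  proof eventually_elim
    case (elim n)
    have "real n ^ 2 / 8 \<le> real (n div 2 * (n - n div 2))"
      by (rule sq_div_eight_le_mult_halves[OF elim])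
    also have "\<dots> \<le> log 2 (card (matousek_usos n))"
      using le_log2_of_power[OF card_matousek_usos_ge] .
    finally have lower: "real n ^ 2 / 8 \<le> log 2 (card (matousek_usos n))" .
    have "0 < card (matousek_usos n)"
      using card_matousek_usos_ge[of 0 n] by simp
    then have "log 2 (card (matousek_usos n)) \<le> n * n + n"
      using log2_of_power_le[OF card_matousek_usos_le] by simp
    also have "\<dots> \<le> 2 * real n ^ 2"
      using of_nat_mono[OF le_square[of n]] by (simp add: power2_eq_square)
    finally show ?case
      using lower zero_le_power2[of "real n"] by simp
  qed
qed simp_all

end
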